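(* Let $d \ge 1$ and $r \ge 1$ be integers, and let $X \subset \mathbb{R}^d$ be a finite set of points with $\left\lceil \frac{|X|}{2} \right\rceil \ge r$. Then there is a partition of $X$ into $r$ sets $X_1, \ldots, X_r$ and an affine hyperplane $L \subset \mathbb{R}^d$ such that $L \cap \operatorname{conv} X_j \neq \emptyset$ for every $j \in \{1,\ldots,r\}$.
   Context: $\operatorname{conv}$ denotes the convex hull. This is the case $k=d-1$ of the statement: for integers $0 \le k < d$ and finite $X \subset \mathbb{R}^d$ with $\lceil |X|(k+1)/(d+k+1)\rceil \ge r$, there is a partition of $X$ into $r$ sets and a $k$-dimensional affine subspace meeting the convex hull of each part; for $k=d-1$ the ratio $(k+1)/(d+k+1)$ equals $1/2$. *)

theory Defs
  imports "HOL-Analysis.Analysis"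
begin

end

theory Submission
  imports Defs
begin

text \<open>Fix any nonzero direction \<open>a\<close>. Remove the point \<open>u\<close> of \<open>X\<close> with smallest \<open>a \<bullet> u\<close> and the point
  \<open>v\<close> with largest \<open>a \<bullet> v\<close> among the rest, and partition the remaining \<open>|X| - 2\<close> points into
  \<open>r - 1\<close> parts whose convex hulls all meet one level set \<open>a \<bullet> x = b\<close>. That level \<open>b\<close> is attained
  in the convex hull of the remaining points, so \<open>a \<bullet> u \<le> b \<le> a \<bullet> v\<close>, and the segment \<open>[u, v]\<close>
  also crosses the hyperplane; \<open>{u, v}\<close> is the \<open>r\<close>-th part. The induction ends with the
  whole (nonempty) set as one part, which needs only \<open>|X| \<ge> 2r - 1\<close>.\<close>

definition indexed_partition :: "nat \<Rightarrow> (nat \<Rightarrow> 'a set) \<Rightarrow> 'a set \<Rightarrow> bool" where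
  "indexed_partition r P X \<longleftrightarrow>
     (\<forall>j\<in>{1..r}. P j \<noteq> {}) \<and>
     (\<forall>i\<in>{1..r}. \<forall>j\<in>{1..r}. i \<noteq> j \<longrightarrow> P i \<inter> P j = {}) \<and>
     (\<Union>j\<in>{1..r}. P j) = X"

lemma indexed_partition_single:
  "X \<noteq> {} \<Longrightarrow> indexed_partition 1 (\<lambda>_. X) X"
  by (simp add: indexed_partition_def)

lemma indexed_partition_extend:
  assumes "indexed_partition r P X" "S \<noteq> {}" "S \<inter> X = {}"
  shows "indexed_partition (Suc r) (P(Suc r := S)) (X \<union> S)"
proof -
  have parts: "\<And>j. j \<in> {1..r} \<Longrightarrow> P j \<subseteq> X"
    using assms(1) by (auto simp: indexed_partition_def)
  have range: "{1..Suc r} = insert (Suc r) {1..r}" by auto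
  have "\<forall>j\<in>{1..Suc r}. (P(Suc r := S)) j \<noteq> {}"
    using assms(1,2) by (simp add: range indexed_partition_def)
  moreover have "(P(Suc r := S)) i \<inter> (P(Suc r := S)) j = {}"
    if "i \<in> {1..Suc r}" "j \<in> {1..Suc r}" "i \<noteq> j" for i j
    using that assms(1,3) parts[of i] parts[of j] unfolding range indexed_partition_def
    by (cases "i = Suc r"; cases "j = Suc r") auto
  moreover have "(\<Union>j\<in>{1..Suc r}. (P(Suc r := S)) j) = X \<union> S"
    using assms(1) by (auto simp: range indexed_partition_def)
  ultimately show ?thesis unfolding indexed_partition_def by blast
qed

lemma extreme_pair_along:
  fixes f :: "'a \<Rightarrow> 'b::linorder"
  assumes "finite X" "2 \<le> card X"
  obtains u v where "u \<in> X" "v \<in> X" "u \<noteq> v" "\<And>x. x \<in> X \<Longrightarrow> f u \<le> f x \<and> f x \<le> f v"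
proof -
  have "X \<noteq> {}" using assms by auto
  then have "Min (f ` X) \<in> f ` X" using assms(1) by simp
  then obtain u where u: "u \<in> X" "f u = Min (f ` X)" by force
  have "card (X - {u}) \<ge> 1" using assms u by simp
  then have "X - {u} \<noteq> {}" by (intro notI) simp
  then have "Max (f ` (X - {u})) \<in> f ` (X - {u})" using assms(1) by simp
  then obtain v where v: "v \<in> X - {u}" "f v = Max (f ` (X - {u}))" by force
  have min: "f u \<le> f x" if "x \<in> X" for x
    using that u assms(1) by simp
  have max: "f x \<le> f v" if "x \<in> X" for x
  proof (cases "x = u")
    case True
    then show ?thesis using min[of v] v(1) by simp
  next
    case False
    then show ?thesis using that v assms(1) by simp
  qed
  show thesis using that u v min max by blast
qed

lemma convex_hull_inner_bounds:
  assumes "P \<subseteq> {x. c \<le> a \<bullet> x \<and> a \<bullet> x \<le> d}" "y \<in> convex hull P"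
  shows "c \<le> a \<bullet> y \<and> a \<bullet> y \<le> d"
proof -
  have "convex {x. c \<le> a \<bullet> x \<and> a \<bullet> x \<le> d}"
    using convex_Int[OF convex_halfspace_ge convex_halfspace_le] by (simp add: Int_def)
  then show ?thesis using hull_minimal[OF assms(1)] assms(2) by blast
qed

lemma hyperplane_meets_segment_hull:
  fixes a :: "'a::euclidean_space"
  assumes "a \<bullet> u \<le> b" "b \<le> a \<bullet> v"
  shows "{x. a \<bullet> x = b} \<inter> convex hull {u, v} \<noteq> {}"
  using connected_ivt_hyperplane[of "convex hull {u, v}" u v a b] assms
  by (auto simp: convex_connected hull_inc)

lemma hyperplane_transversal_partition:
  fixes a :: "'a::euclidean_space"
  assumes "1 \<le> r" "finite X" "2 * r \<le> card X + 1"
  shows "\<exists>P b. indexed_partition r P X \<and> (\<forall>j\<in>{1..r}. {x. a \<bullet> x = b} \<inter> convex hull (P j) \<noteq> {})"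
  using assms
proof (induction r arbitrary: X rule: nat_induct_at_least)
  case base
  then obtain x where "x \<in> X" by fastforce
  then have "{y. a \<bullet> y = a \<bullet> x} \<inter> convex hull X \<noteq> {}"
    using hull_subset by fastforce
  moreover have "indexed_partition 1 (\<lambda>_. X) X"
    using indexed_partition_single \<open>x \<in> X\<close> by blast
  ultimately show ?case by auto
next
  case (Suc r)
  have "2 \<le> card X" using Suc.hyps Suc.prems(2) by simp
  then obtain u v where uv: "u \<in> X" "v \<in> X" "u \<noteq> v"
    and slab: "\<And>x. x \<in> X \<Longrightarrow> a \<bullet> u \<le> a \<bullet> x \<and> a \<bullet> x \<le> a \<bullet> v"
    using extreme_pair_along[of X "\<lambda>x. a \<bullet> x"] Suc.prems(1) by blast
  let ?Y = "X - {u, v}"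
  have "card ?Y = card X - 2" using uv Suc.prems(1) by (subst card_Diff_subset) auto
  then have "2 * r \<le> card ?Y + 1" using Suc.prems(2) by simp
  then obtain P b where P: "indexed_partition r P ?Y"
      and meets: "\<forall>j\<in>{1..r}. {x. a \<bullet> x = b} \<inter> convex hull (P j) \<noteq> {}"
    using Suc.IH[of ?Y] Suc.prems(1) by blast
  have "1 \<in> {1..r}" using Suc.hyps by simp
  then obtain y where y: "y \<in> convex hull (P 1)" "a \<bullet> y = b" using meets by blast
  have "P 1 \<subseteq> X" using P \<open>1 \<in> {1..r}\<close> by (auto simp: indexed_partition_def)
  then have "a \<bullet> u \<le> b \<and> b \<le> a \<bullet> v"
    using convex_hull_inner_bounds[OF _ y(1)] slab y(2) by blast
  then have "{x. a \<bullet> x = b} \<inter> convex hull {u, v} \<noteq> {}"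
    using hyperplane_meets_segment_hull by blast
  then have "\<forall>j\<in>{1..Suc r}. {x. a \<bullet> x = b} \<inter> convex hull ((P(Suc r := {u, v})) j) \<noteq> {}"
    using meets by (auto simp: le_Suc_eq)
  moreover have "indexed_partition (Suc r) (P(Suc r := {u, v})) (?Y \<union> {u, v})"
    using P by (intro indexed_partition_extend) auto
  moreover have "?Y \<union> {u, v} = X" using uv by auto
  ultimately show ?case by metis
qed

theorem mainTheorem1:
  fixes X :: "'a::euclidean_space set" and r :: nat
  assumes "r \<ge> 1" and "finite X" and "\<lceil>real (card X) / 2\<rceil> \<ge> int r"
  shows "\<exists>(P :: nat \<Rightarrow> 'a set) (a :: 'a) (b :: real).
           (\<forall>j\<in>{1..r}. P j \<noteq> {}) \<and>
           (\<forall>i\<in>{1..r}. \<forall>j\<in>{1..r}. i \<noteq> j \<longrightarrow> P i \<inter> P j = {}) \<and>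
           (\<Union>j\<in>{1..r}. P j) = X \<and>
           a \<noteq> 0 \<and>
           (\<forall>j\<in>{1..r}. {x. a \<bullet> x = b} \<inter> convex hull (P j) \<noteq> {})"
proof -
  have "real r - 1 < real (card X) / 2" using assms(3) by (simp add: le_ceiling_iff)
  then have "2 * r \<le> card X + 1" by linarith
  then obtain P b where "indexed_partition r P X"
      and "\<forall>j\<in>{1..r}. {x. One \<bullet> x = b} \<inter> convex hull (P j) \<noteq> {}"
    using hyperplane_transversal_partition[OF assms(1,2)] by blast
  moreover have "(One :: 'a) \<noteq> 0" by simp
  ultimately show ?thesis unfolding indexed_partition_def by blast
qed

end
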